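(* Let $H$ be a numerical semigroup minimally generated by $a_1<a_2<\dots<a_n$ with $n>1$. If $H$ is quadratic, then (a) there exist $k,\ell\geq 2$ such that $a_1$ divides $a_k+a_\ell$; (b) $2a_i\in\langle a_1,\dots,a_{i-1},a_{i+1},\dots,a_n\rangle$ for all $2\leq i\leq n$.
   Context: A numerical semigroup is a submonoid of $\mathbb{N}$ with finite complement. $K$ is a field, $S=K[x_1,\dots,x_n]$ and $I_H=\ker(S\to K[t],\ x_i\mapsto t^{a_i})$. For $0\neq f\in S$, $f^*$ is its homogeneous component of least degree, and $I_H^*=(f^*:0\ne f\in I_H)$. $H$ is quadratic if $I_H^*$ is generated by homogeneous polynomials of degree 2. $\langle b_1,\dots,b_m\rangle$ denotes the semigroup generated by $b_1,\dots,b_m$. *)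

theory Defs
  imports "HOL-Library.Poly_Mapping"
begin

(* Generators a 1 < ... < a n are a function a :: nat => nat on indices {1..n}.
   Monomials: exponent vectors  nat =>0 nat  (variable x_i has index i).
   Polynomials over the field 'k:  (nat =>0 nat) =>0 'k.
   Univariate K[t]:  nat =>0 'k. *)


definition sg_gen :: "(nat \<Rightarrow> nat) \<Rightarrow> nat set \<Rightarrow> nat set" where
  "sg_gen a J = {s. \<exists>c::nat \<Rightarrow> nat. s = (\<Sum>j\<in>J. c j * a j)}"

definition min_gen_numerical :: "(nat \<Rightarrow> nat) \<Rightarrow> nat \<Rightarrow> bool" where
  "min_gen_numerical a n \<longleftrightarrow>
     (\<forall>i j. 1 \<le> i \<and> i < j \<and> j \<le> n \<longrightarrow> a i < a j) \<and>
     finite (UNIV - sg_gen a {1..n}) \<and>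
     (\<forall>i\<in>{1..n}. a i \<notin> sg_gen a ({1..n} - {i}))"

definition in_S :: "nat \<Rightarrow> ((nat \<Rightarrow>\<^sub>0 nat) \<Rightarrow>\<^sub>0 'k::field) \<Rightarrow> bool" where
  "in_S n f \<longleftrightarrow> (\<forall>m\<in>Poly_Mapping.keys f. Poly_Mapping.keys m \<subseteq> {1..n})"

definition tdeg :: "(nat \<Rightarrow>\<^sub>0 nat) \<Rightarrow> nat" where
  "tdeg m = (\<Sum>i\<in>Poly_Mapping.keys m. Poly_Mapping.lookup m i)"

text \<open>The map S -> K[t], x_i |-> t^(a i).\<close>
definition sg_map :: "(nat \<Rightarrow> nat) \<Rightarrow> nat \<Rightarrow> ((nat \<Rightarrow>\<^sub>0 nat) \<Rightarrow>\<^sub>0 'k::field) \<Rightarrow> (nat \<Rightarrow>\<^sub>0 'k)" where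
  "sg_map a n f = (\<Sum>m\<in>Poly_Mapping.keys f. Poly_Mapping.single (\<Sum>i\<in>{1..n}. a i * Poly_Mapping.lookup m i) (Poly_Mapping.lookup f m))"

definition I_H :: "(nat \<Rightarrow> nat) \<Rightarrow> nat \<Rightarrow> ((nat \<Rightarrow>\<^sub>0 nat) \<Rightarrow>\<^sub>0 'k::field) set" where
  "I_H a n = {f. in_S n f \<and> sg_map a n f = 0}"

text \<open>Homogeneous component of least degree (f nonzero).\<close>
definition initial_form :: "((nat \<Rightarrow>\<^sub>0 nat) \<Rightarrow>\<^sub>0 'k::field) \<Rightarrow> ((nat \<Rightarrow>\<^sub>0 nat) \<Rightarrow>\<^sub>0 'k)" where
  "initial_form f = (let d = Min (tdeg ` Poly_Mapping.keys f) in
      (\<Sum>m\<in>{m\<in>Poly_Mapping.keys f. tdeg m = d}. Poly_Mapping.single m (Poly_Mapping.lookup f m)))"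

definition homogeneous :: "nat \<Rightarrow> ((nat \<Rightarrow>\<^sub>0 nat) \<Rightarrow>\<^sub>0 'k::field) \<Rightarrow> bool" where
  "homogeneous d f \<longleftrightarrow> (\<forall>m\<in>Poly_Mapping.keys f. tdeg m = d)"

definition ideal_gen :: "nat \<Rightarrow> ((nat \<Rightarrow>\<^sub>0 nat) \<Rightarrow>\<^sub>0 'k::field) set \<Rightarrow> ((nat \<Rightarrow>\<^sub>0 nat) \<Rightarrow>\<^sub>0 'k) set" where
  "ideal_gen n G = {f. \<exists>F c. finite F \<and> F \<subseteq> G \<and> (\<forall>g\<in>F. in_S n (c g))
                        \<and> f = (\<Sum>g\<in>F. c g * g)}"

definition I_H_star :: "'k::field itself \<Rightarrow> (nat \<Rightarrow> nat) \<Rightarrow> nat \<Rightarrow> ((nat \<Rightarrow>\<^sub>0 nat) \<Rightarrow>\<^sub>0 'k) set" where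
  "I_H_star _ a n = ideal_gen n (initial_form ` (I_H a n - {0}))"

definition quadratic :: "'k::field itself \<Rightarrow> (nat \<Rightarrow> nat) \<Rightarrow> nat \<Rightarrow> bool" where
  "quadratic K a n \<longleftrightarrow>
     (\<exists>G::((nat \<Rightarrow>\<^sub>0 nat) \<Rightarrow>\<^sub>0 'k) set. (\<forall>g\<in>G. in_S n g \<and> homogeneous 2 g) \<and> ideal_gen n G = I_H_star K a n)"

end

theory Submission
  imports Defs
begin

text \<open>Grade \<open>S\<close> by degree and by weight \<open>x\<^sub>i \<mapsto> a\<^sub>i\<close>. Since \<open>a\<^sub>1 < a\<^sub>i\<close>, the binomial
  \<open>x\<^sub>i\<^bsup>a\<^sub>1\<^esup> - x\<^sub>1\<^bsup>a\<^sub>i\<^esup>\<close> has initial form \<open>x\<^sub>i\<^bsup>a\<^sub>1\<^esup>\<close>; writing it through quadratic generators of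
  \<open>I\<^sub>H\<^sup>*\<close>, and those through initial forms, produces some \<open>f \<in> I\<^sub>H\<close> whose initial form contains
  \<open>x\<^sub>i\<^sup>2\<close>. The term \<open>x\<^sub>i\<^sup>2\<close> of \<open>f\<close> must be cancelled in \<open>K[t]\<close> by another term of weight \<open>2a\<^sub>i\<close>,
  which gives (b).

  For (a), assume \<open>a\<^sub>1\<close> divides no \<open>a\<^sub>k + a\<^sub>l\<close>. Let \<open>c\<close> be least with
  \<open>c a\<^sub>1 \<in> \<langle>a\<^sub>2, \<dots>, a\<^sub>n\<rangle>\<close> and \<open>x\<^sup>b\<close> a monomial in \<open>x\<^sub>2, \<dots>, x\<^sub>n\<close> of weight \<open>c a\<^sub>1\<close> and
  maximal degree \<open>B\<close>; then \<open>B < c\<close> and \<open>B \<noteq> 2\<close>, so \<open>x\<^sup>b\<close> is the initial form of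
  \<open>x\<^sup>b - x\<^sub>1\<^sup>c\<close>. The same descent yields \<open>f \<in> I\<^sub>H\<close> and a nonconstant monomial \<open>x\<^sup>u\<close> in
  \<open>x\<^sub>2, \<dots>, x\<^sub>n\<close> such that the coefficients of \<open>x\<^sup>u f\<^sup>*\<close> at the monomials in \<open>x\<^sub>2, \<dots>, x\<^sub>n\<close> of
  weight \<open>c a\<^sub>1\<close> and degree \<open>B\<close> have nonzero sum. But by minimality of \<open>c\<close> and maximality of
  \<open>B\<close> these are all the terms of \<open>x\<^sup>u f\<close> of weight \<open>c a\<^sub>1\<close>, whose coefficients sum to zero.\<close>

section \<open>Coefficient sums over shifted monomials\<close>

lemma poly_mapping_sum_single:
  fixes p :: "'a \<Rightarrow>\<^sub>0 'b::comm_monoid_add"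
  shows "p = (\<Sum>k\<in>Poly_Mapping.keys p. Poly_Mapping.single k (Poly_Mapping.lookup p k))"
  by (rule poly_mapping_eqI) (simp add: lookup_sum lookup_single when_def in_keys_iff)

text \<open>Being linear in \<open>p\<close>,
  it can only be nonzero on an ideal element if it is nonzero on some shifted generator.\<close>
definition shifted_coeff_sum ::
    "(nat \<Rightarrow>\<^sub>0 nat) set \<Rightarrow> (nat \<Rightarrow>\<^sub>0 nat) \<Rightarrow> ((nat \<Rightarrow>\<^sub>0 nat) \<Rightarrow>\<^sub>0 'k::field) \<Rightarrow> 'k" where
  "shifted_coeff_sum R t p = (\<Sum>k\<in>{k\<in>Poly_Mapping.keys p. t + k \<in> R}. Poly_Mapping.lookup p k)"

lemma shifted_coeff_sum_superset:
  assumes "finite S" "Poly_Mapping.keys p \<subseteq> S"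
  shows "shifted_coeff_sum R t p = (\<Sum>k\<in>S. if t + k \<in> R then Poly_Mapping.lookup p k else 0)"
proof -
  have "shifted_coeff_sum R t p
      = (\<Sum>k\<in>Poly_Mapping.keys p. if t + k \<in> R then Poly_Mapping.lookup p k else 0)"
    unfolding shifted_coeff_sum_def by (simp add: sum.inter_filter)
  also have "\<dots> = (\<Sum>k\<in>S. if t + k \<in> R then Poly_Mapping.lookup p k else 0)"
    by (rule sum.mono_neutral_left) (use assms in \<open>auto simp: in_keys_iff\<close>)
  finally show ?thesis .
qed

lemma shifted_coeff_sum_add:
  "shifted_coeff_sum R t (p + q) = shifted_coeff_sum R t p + shifted_coeff_sum R t q"
proof -
  let ?S = "Poly_Mapping.keys p \<union> Poly_Mapping.keys q"
  have "shifted_coeff_sum R t (p + q)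
      = (\<Sum>k\<in>?S. if t + k \<in> R then Poly_Mapping.lookup (p + q) k else 0)"
    by (rule shifted_coeff_sum_superset) (simp_all add: keys_add)
  also have "\<dots> = (\<Sum>k\<in>?S. if t + k \<in> R then Poly_Mapping.lookup p k else 0)
                + (\<Sum>k\<in>?S. if t + k \<in> R then Poly_Mapping.lookup q k else 0)"
    by (simp add: lookup_add if_distrib sum.distrib[symmetric] cong: if_cong)
  also have "\<dots> = shifted_coeff_sum R t p + shifted_coeff_sum R t q"
    by (subst (1 2) shifted_coeff_sum_superset[of ?S]) auto
  finally show ?thesis .
qed

lemma shifted_coeff_sum_zero: "shifted_coeff_sum R t 0 = 0"
  by (simp add: shifted_coeff_sum_def)

lemma shifted_coeff_sum_sum:
  "finite A \<Longrightarrow> shifted_coeff_sum R t (\<Sum>x\<in>A. f x) = (\<Sum>x\<in>A. shifted_coeff_sum R t (f x))"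
  by (induction A rule: finite_induct) (simp_all add: shifted_coeff_sum_add shifted_coeff_sum_zero)

lemma shifted_coeff_sum_single:
  "shifted_coeff_sum R t (Poly_Mapping.single m v) = (if t + m \<in> R then v else 0)"
proof (cases "v = 0")
  case False
  then have "{k\<in>Poly_Mapping.keys (Poly_Mapping.single m v). t + k \<in> R} = (if t + m \<in> R then {m} else {})"
    by auto
  then show ?thesis unfolding shifted_coeff_sum_def by simp
qed (simp add: shifted_coeff_sum_def)

lemma shifted_coeff_sum_single_mult:
  "shifted_coeff_sum R t (Poly_Mapping.single u c * p) = c * shifted_coeff_sum R (t + u) p"
proof -
  have "Poly_Mapping.single u c * p
      = (\<Sum>k\<in>Poly_Mapping.keys p. Poly_Mapping.single (u + k) (c * Poly_Mapping.lookup p k))"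
    by (subst poly_mapping_sum_single[of p]) (simp add: sum_distrib_left mult_single)
  then have "shifted_coeff_sum R t (Poly_Mapping.single u c * p)
      = c * (\<Sum>k\<in>Poly_Mapping.keys p. if (t + u) + k \<in> R then Poly_Mapping.lookup p k else 0)"
    by (simp add: shifted_coeff_sum_sum shifted_coeff_sum_single sum_distrib_left add.assoc
        if_distrib cong: if_cong)
  also have "\<dots> = c * shifted_coeff_sum R (t + u) p"
    by (subst shifted_coeff_sum_superset[of "Poly_Mapping.keys p"]) auto
  finally show ?thesis .
qed

lemma shifted_coeff_sum_mult:
  "shifted_coeff_sum R t (q * p)
    = (\<Sum>u\<in>Poly_Mapping.keys q. Poly_Mapping.lookup q u * shifted_coeff_sum R (t + u) p)"
  by (subst poly_mapping_sum_single[of q])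
    (simp add: sum_distrib_right shifted_coeff_sum_sum shifted_coeff_sum_single_mult)

lemma shifted_coeff_sum_nonzero_imp_key:
  "shifted_coeff_sum R t p \<noteq> 0 \<Longrightarrow> \<exists>k\<in>Poly_Mapping.keys p. t + k \<in> R"
  unfolding shifted_coeff_sum_def by (metis (mono_tags, lifting) mem_Collect_eq sum.neutral)

lemma shifted_coeff_sum_ideal_gen:
  assumes "p \<in> ideal_gen n G" "shifted_coeff_sum R t p \<noteq> 0"
  shows "\<exists>g\<in>G. \<exists>u. shifted_coeff_sum R (t + u) g \<noteq> 0"
proof -
  from assms(1) obtain F c where F: "finite F" "F \<subseteq> G" "p = (\<Sum>g\<in>F. c g * g)"
    unfolding ideal_gen_def by blast
  then have "shifted_coeff_sum R t p = (\<Sum>g\<in>F. \<Sum>u\<in>Poly_Mapping.keys (c g).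
      Poly_Mapping.lookup (c g) u * shifted_coeff_sum R (t + u) g)"
    by (simp add: shifted_coeff_sum_sum shifted_coeff_sum_mult)
  with assms(2) obtain g u where "g \<in> F" "shifted_coeff_sum R (t + u) g \<noteq> 0"
    by (metis (no_types, lifting) mult_zero_right sum.neutral)
  with F show ?thesis by blast
qed

lemma generator_in_ideal_gen: "g \<in> G \<Longrightarrow> g \<in> ideal_gen n G"
  unfolding ideal_gen_def
  by (intro CollectI exI[of _ "{g}"] exI[of _ "\<lambda>_. 1"]) (simp add: in_S_def)

section \<open>Degree and weight of monomials\<close>

lemma tdeg_superset:
  "finite S \<Longrightarrow> Poly_Mapping.keys m \<subseteq> S \<Longrightarrow> tdeg m = (\<Sum>i\<in>S. Poly_Mapping.lookup m i)"
  unfolding tdeg_def by (rule sum.mono_neutral_left) (auto simp: in_keys_iff)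

lemma tdeg_add: "tdeg (p + q) = tdeg p + tdeg q"
proof -
  let ?S = "Poly_Mapping.keys p \<union> Poly_Mapping.keys q"
  have "tdeg (p + q) = (\<Sum>i\<in>?S. Poly_Mapping.lookup (p + q) i)"
    by (rule tdeg_superset) (simp_all add: keys_add)
  also have "\<dots> = (\<Sum>i\<in>?S. Poly_Mapping.lookup p i) + (\<Sum>i\<in>?S. Poly_Mapping.lookup q i)"
    by (simp add: lookup_add sum.distrib)
  also have "\<dots> = tdeg p + tdeg q"
    by (subst (1 2) tdeg_superset[of ?S]) auto
  finally show ?thesis .
qed

lemma tdeg_eq_0_iff: "tdeg m = 0 \<longleftrightarrow> m = 0"
proof
  assume "tdeg m = 0"
  then show "m = 0"
    unfolding tdeg_def by (auto simp: sum_eq_0_iff in_keys_iff intro!: poly_mapping_eqI)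
qed (simp add: tdeg_def)

lemma tdeg_single: "tdeg (Poly_Mapping.single i k) = k"
  by (simp add: tdeg_def)

lemma tdeg_Suc_split:
  assumes "tdeg m = Suc d"
  obtains j m' where "m = Poly_Mapping.single j 1 + m'" "tdeg m' = d"
proof -
  have "m \<noteq> 0"
    using assms tdeg_eq_0_iff[of m] by simp
  then obtain j where j: "j \<in> Poly_Mapping.keys m"
    by (metis ex_in_conv keys_eq_empty)
  define m' where "m' = m - Poly_Mapping.single j 1"
  have "m = Poly_Mapping.single j 1 + m'"
    using j unfolding m'_def
    by (intro poly_mapping_eqI) (auto simp: lookup_add lookup_minus lookup_single when_def in_keys_iff)
  moreover from this have "tdeg m' = d"
    using assms by (simp add: tdeg_add tdeg_single)
  ultimately show thesis by (rule that)
qed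

lemma tdeg_eq_2:
  assumes "tdeg m = 2"
  obtains k l where "m = Poly_Mapping.single k 1 + Poly_Mapping.single l 1"
proof -
  obtain k m' where "m = Poly_Mapping.single k 1 + m'" "tdeg m' = 1"
    using assms tdeg_Suc_split[of m 1] by auto
  moreover obtain l m'' where "m' = Poly_Mapping.single l 1 + m''" "tdeg m'' = 0"
    using \<open>tdeg m' = 1\<close> tdeg_Suc_split[of m' 0] by auto
  ultimately have "m = Poly_Mapping.single k 1 + Poly_Mapping.single l 1"
    using tdeg_eq_0_iff[of m''] by simp
  then show thesis by (rule that)
qed

lemma keys_subset_keys_add: "Poly_Mapping.keys (u :: 'a \<Rightarrow>\<^sub>0 nat) \<subseteq> Poly_Mapping.keys (u + k)"
  by (auto simp: in_keys_iff lookup_add)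

lemma add_eq_single_imp_single:
  fixes u k :: "'a \<Rightarrow>\<^sub>0 nat"
  assumes "u + k = Poly_Mapping.single i N"
  shows "k = Poly_Mapping.single i (Poly_Mapping.lookup k i)"
proof (rule poly_mapping_eqI)
  fix j
  have "Poly_Mapping.lookup u j + Poly_Mapping.lookup k j = (if i = j then N else 0)"
    using arg_cong[OF assms, of "\<lambda>m. Poly_Mapping.lookup m j"]
    by (simp add: lookup_add lookup_single when_def)
  then show "Poly_Mapping.lookup k j = Poly_Mapping.lookup (Poly_Mapping.single i (Poly_Mapping.lookup k i)) j"
    by (cases "i = j") (simp_all add: lookup_single_not_eq)
qed

definition weight :: "(nat \<Rightarrow> nat) \<Rightarrow> nat \<Rightarrow> (nat \<Rightarrow>\<^sub>0 nat) \<Rightarrow> nat" where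
  "weight a n m = (\<Sum>i\<in>{1..n}. a i * Poly_Mapping.lookup m i)"

lemma weight_add: "weight a n (p + q) = weight a n p + weight a n q"
  by (simp add: weight_def lookup_add distrib_left sum.distrib)

lemma weight_single: "i \<in> {1..n} \<Longrightarrow> weight a n (Poly_Mapping.single i k) = a i * k"
  by (simp add: weight_def lookup_single when_def if_distrib sum.delta cong: if_cong)

lemma weight_split:
  "i \<in> {1..n} \<Longrightarrow>
    weight a n m = a i * Poly_Mapping.lookup m i + (\<Sum>j\<in>{1..n}-{i}. a j * Poly_Mapping.lookup m j)"
  unfolding weight_def by (simp add: sum.remove)

lemma weight_tail:
  assumes "Poly_Mapping.keys m \<subseteq> {2..n}"
  shows "weight a n m = (\<Sum>j\<in>{2..n}. a j * Poly_Mapping.lookup m j)"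
  unfolding weight_def
  by (rule sum.mono_neutral_right) (use assms in \<open>auto simp: subset_iff in_keys_iff\<close>)

section \<open>Terms of elements of \<open>I\<^sub>H\<close> and of their initial forms\<close>

lemma lookup_sg_map:
  "Poly_Mapping.lookup (sg_map a n f) w
    = (\<Sum>m\<in>{m\<in>Poly_Mapping.keys f. weight a n m = w}. Poly_Mapping.lookup f m)"
  by (simp add: sg_map_def weight_def lookup_sum lookup_single when_def sum.inter_filter)

lemma I_H_key_partner:
  assumes "h \<in> I_H a n" "m \<in> Poly_Mapping.keys h"
  shows "\<exists>m'\<in>Poly_Mapping.keys h. m' \<noteq> m \<and> weight a n m' = weight a n m"
proof (rule ccontr)
  assume "\<not> ?thesis"
  then have "{m'\<in>Poly_Mapping.keys h. weight a n m' = weight a n m} = {m}"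
    using assms(2) by auto
  then have "Poly_Mapping.lookup (sg_map a n h) (weight a n m) = Poly_Mapping.lookup h m"
    by (simp add: lookup_sg_map)
  with assms show False by (simp add: I_H_def in_keys_iff)
qed

lemma I_H_keys_subset: "h \<in> I_H a n \<Longrightarrow> m \<in> Poly_Mapping.keys h \<Longrightarrow> Poly_Mapping.keys m \<subseteq> {1..n}"
  by (auto simp: I_H_def in_S_def)

lemma min_gen_numerical_pos: "min_gen_numerical a n \<Longrightarrow> i \<in> {1..n} \<Longrightarrow> 0 < a i"
proof (rule ccontr)
  assume mg: "min_gen_numerical a n" and i: "i \<in> {1..n}" and "\<not> 0 < a i"
  moreover have "0 \<in> sg_gen a ({1..n} - {i})"
    unfolding sg_gen_def by (intro CollectI exI[of _ "\<lambda>_. 0"]) simp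
  ultimately show False unfolding min_gen_numerical_def by (metis neq0_conv)
qed

lemma min_gen_numerical_less:
  "min_gen_numerical a n \<Longrightarrow> 1 \<le> i \<Longrightarrow> i < j \<Longrightarrow> j \<le> n \<Longrightarrow> a i < a j"
  unfolding min_gen_numerical_def by blast

lemma min_gen_numerical_not_in_others:
  "min_gen_numerical a n \<Longrightarrow> i \<in> {1..n} \<Longrightarrow> a i \<notin> sg_gen a ({1..n} - {i})"
  unfolding min_gen_numerical_def by blast

lemma weight_off_index_pos:
  assumes mg: "min_gen_numerical a n" and i: "i \<in> {1..n}"
    and m: "Poly_Mapping.keys m \<subseteq> {1..n}" "weight a n m = a i * k" "m \<noteq> Poly_Mapping.single i k"
  shows "0 < (\<Sum>j\<in>{1..n}-{i}. a j * Poly_Mapping.lookup m j)"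
proof (rule ccontr)
  assume "\<not> ?thesis"
  then have rest: "(\<Sum>j\<in>{1..n}-{i}. a j * Poly_Mapping.lookup m j) = 0"
    by simp
  have "Poly_Mapping.lookup m j = 0" if "j \<noteq> i" for j
  proof (cases "j \<in> {1..n}")
    case True
    then have "a j * Poly_Mapping.lookup m j = 0"
      using rest that by (simp add: sum_eq_0_iff)
    then show ?thesis
      using min_gen_numerical_pos[OF mg True] by simp
  qed (use m(1) in \<open>auto simp: in_keys_iff\<close>)
  moreover have "Poly_Mapping.lookup m i = k"
    using m(2) weight_split[OF i, of a m] min_gen_numerical_pos[OF mg i] unfolding rest by simp
  ultimately have "m = Poly_Mapping.single i k"
    by (intro poly_mapping_eqI) (auto simp: lookup_single when_def)
  with m(3) show False ..
qed

text \<open>The pure power must be cancelled by another term of the same weight \<open>k a\<^sub>i\<close>.\<close>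
lemma I_H_pure_power_key:
  fixes h :: "(nat \<Rightarrow>\<^sub>0 nat) \<Rightarrow>\<^sub>0 'k::field"
  assumes mg: "min_gen_numerical a n" and h: "h \<in> I_H a n" and i: "i \<in> {1..n}"
    and key: "Poly_Mapping.single i k \<in> Poly_Mapping.keys h" and "k \<le> 2"
  shows "k = 2 \<and> 2 * a i \<in> sg_gen a ({1..n} - {i})"
proof -
  obtain m where m: "m \<in> Poly_Mapping.keys h" "weight a n m = a i * k" "m \<noteq> Poly_Mapping.single i k"
    using I_H_key_partner[OF h key] weight_single[OF i] by metis
  define r where "r = Poly_Mapping.lookup m i"
  define rest where "rest = (\<Sum>j\<in>{1..n}-{i}. a j * Poly_Mapping.lookup m j)"
  have eq: "a i * k = a i * r + rest"
    using m(2) weight_split[OF i, of a m] unfolding r_def rest_def by simp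
  have rest_in: "rest \<in> sg_gen a ({1..n}-{i})"
    unfolding sg_gen_def rest_def
    by (intro CollectI exI[of _ "Poly_Mapping.lookup m"]) (simp add: mult.commute)
  have "0 < rest"
    unfolding rest_def by (rule weight_off_index_pos[OF mg i I_H_keys_subset[OF h m(1)] m(2,3)])
  then have "a i * r < a i * k"
    using eq by simp
  then have "r < k" by simp
  have rest_eq: "rest = a i * (k - r)"
    using eq by (simp add: diff_mult_distrib2)
  consider "k - r = 1" | "k = 2" "r = 0"
    using \<open>r < k\<close> \<open>k \<le> 2\<close> by linarith
  then show ?thesis
  proof cases
    case 1
    then show ?thesis
      using rest_eq rest_in min_gen_numerical_not_in_others[OF mg i] by simp
  qed (use rest_eq rest_in in \<open>simp add: mult.commute\<close>)
qed

lemma I_H_key_tdeg_ge_2: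
  fixes h :: "(nat \<Rightarrow>\<^sub>0 nat) \<Rightarrow>\<^sub>0 'k::field"
  assumes mg: "min_gen_numerical a n" and "1 \<le> n" and h: "h \<in> I_H a n"
    and m: "m \<in> Poly_Mapping.keys h"
  shows "2 \<le> tdeg m"
proof (rule ccontr)
  assume "\<not> 2 \<le> tdeg m"
  then obtain j where "m = Poly_Mapping.single j (tdeg m)" "j \<in> {1..n}"
  proof (cases "tdeg m")
    case 0
    then have "m = Poly_Mapping.single 1 (tdeg m)"
      using tdeg_eq_0_iff[of m] by simp
    then show thesis using that \<open>1 \<le> n\<close> by simp
  next
    case (Suc d)
    then obtain j m' where "m = Poly_Mapping.single j 1 + m'" "tdeg m' = d"
      by (rule tdeg_Suc_split)
    moreover have "d = 0" using Suc \<open>\<not> 2 \<le> tdeg m\<close> by simp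
    ultimately have "m = Poly_Mapping.single j (tdeg m)"
      using Suc tdeg_eq_0_iff[of m'] by simp
    moreover have "j \<in> {1..n}"
      using I_H_keys_subset[OF h m] keys_subset_keys_add[of "Poly_Mapping.single j 1" m']
        \<open>m = Poly_Mapping.single j 1 + m'\<close> by auto
    ultimately show thesis by (rule that)
  qed
  then show False
    using I_H_pure_power_key[OF mg h, of j "tdeg m"] m \<open>\<not> 2 \<le> tdeg m\<close> by simp
qed

lemma lookup_initial_form:
  "Poly_Mapping.lookup (initial_form h) x =
    (if x \<in> Poly_Mapping.keys h \<and> tdeg x = Min (tdeg ` Poly_Mapping.keys h)
     then Poly_Mapping.lookup h x else 0)"
  unfolding initial_form_def Let_def
  by (simp add: lookup_sum lookup_single when_def if_distrib sum.delta' cong: if_cong)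

lemma keys_initial_form:
  "x \<in> Poly_Mapping.keys (initial_form h) \<Longrightarrow>
    x \<in> Poly_Mapping.keys h \<and> tdeg x = Min (tdeg ` Poly_Mapping.keys h)"
  by (metis in_keys_iff lookup_initial_form)

text \<open>Witness: the binomial \<open>x\<^sup>p - x\<^sup>q\<close>.\<close>
lemma single_in_initial_forms:
  fixes p q :: "nat \<Rightarrow>\<^sub>0 nat"
  assumes "Poly_Mapping.keys p \<subseteq> {1..n}" "Poly_Mapping.keys q \<subseteq> {1..n}"
    and w: "weight a n p = weight a n q" and d: "tdeg p < tdeg q"
  shows "Poly_Mapping.single p (1::'k::field) \<in> initial_form ` (I_H a n - {0})"
proof -
  define f where "f = Poly_Mapping.single p 1 - Poly_Mapping.single q (1::'k)"
  have "p \<noteq> q" using d by auto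
  then have lf: "Poly_Mapping.lookup f x = (if x = p then 1 else if x = q then -1 else 0)" for x
    unfolding f_def by (auto simp: lookup_minus lookup_single when_def)
  have kf: "Poly_Mapping.keys f = {p, q}"
    by (auto simp: in_keys_iff lf split: if_splits)
  have "sg_map a n f = Poly_Mapping.single (weight a n p) 1 + Poly_Mapping.single (weight a n q) (-1)"
    unfolding sg_map_def weight_def[symmetric] kf using \<open>p \<noteq> q\<close> by (simp add: lf)
  also have "\<dots> = 0" unfolding w by (simp flip: single_add)
  finally have "f \<in> I_H a n - {0}"
    using assms lf[of p] by (auto simp: I_H_def in_S_def kf)
  moreover have "initial_form f = Poly_Mapping.single p 1"
  proof (rule poly_mapping_eqI)
    have "Min (tdeg ` Poly_Mapping.keys f) = tdeg p" unfolding kf using d by simp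
    then show "Poly_Mapping.lookup (initial_form f) x = Poly_Mapping.lookup (Poly_Mapping.single p 1) x" for x
      unfolding lookup_initial_form kf using d by (auto simp: lf lookup_single when_def)
  qed
  ultimately show ?thesis by (metis image_eqI)
qed

text \<open>Passing from an element of \<open>(G)\<close> to a generator and from there to an initial form
  multiplies by monomials; as both generators and initial forms have degree at least 2, degree
  counting forces the second multiplier to be \<open>1\<close>.\<close>
lemma I_H_star_generator_shift:
  fixes G :: "((nat \<Rightarrow>\<^sub>0 nat) \<Rightarrow>\<^sub>0 'k::field) set"
  assumes mg: "min_gen_numerical a n" and "1 \<le> n"
    and G2: "\<forall>g\<in>G. homogeneous 2 g" and G: "ideal_gen n G = I_H_star TYPE('k) a n"
    and R: "\<forall>m\<in>R. tdeg m = D"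
    and p: "p \<in> ideal_gen n G" "shifted_coeff_sum R 0 p \<noteq> 0"
  obtains u and h :: "(nat \<Rightarrow>\<^sub>0 nat) \<Rightarrow>\<^sub>0 'k"
  where "h \<in> I_H a n" "shifted_coeff_sum R u (initial_form h) \<noteq> 0" "tdeg u + 2 = D"
    "Min (tdeg ` Poly_Mapping.keys h) = 2" "\<exists>m\<in>R. Poly_Mapping.keys u \<subseteq> Poly_Mapping.keys m"
proof -
  obtain g u where g: "g \<in> G" "shifted_coeff_sum R u g \<noteq> 0"
    using shifted_coeff_sum_ideal_gen[OF p] by auto
  then obtain k where k: "k \<in> Poly_Mapping.keys g" "u + k \<in> R"
    using shifted_coeff_sum_nonzero_imp_key by blast
  have "tdeg k = 2"
    using G2 g(1) k(1) unfolding homogeneous_def by blast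
  moreover have "tdeg (u + k) = D"
    using R k(2) by blast
  ultimately have deg_u: "tdeg u + 2 = D"
    by (simp add: tdeg_add)
  have "g \<in> ideal_gen n (initial_form ` (I_H a n - {0}))"
    using generator_in_ideal_gen[OF g(1), of n] G unfolding I_H_star_def by simp
  from shifted_coeff_sum_ideal_gen[OF this g(2)] obtain f :: "(nat \<Rightarrow>\<^sub>0 nat) \<Rightarrow>\<^sub>0 'k" and u'
    where f: "f \<in> initial_form ` (I_H a n - {0})" "shifted_coeff_sum R (u + u') f \<noteq> 0"
    by blast
  then obtain h :: "(nat \<Rightarrow>\<^sub>0 nat) \<Rightarrow>\<^sub>0 'k"
    where h: "h \<in> I_H a n" "shifted_coeff_sum R (u + u') (initial_form h) \<noteq> 0"
    by auto
  then obtain k' where k': "k' \<in> Poly_Mapping.keys (initial_form h)" "u + u' + k' \<in> R"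
    using shifted_coeff_sum_nonzero_imp_key by blast
  have min_k': "tdeg k' = Min (tdeg ` Poly_Mapping.keys h)" and "2 \<le> tdeg k'"
    using keys_initial_form[OF k'(1)] I_H_key_tdeg_ge_2[OF mg \<open>1 \<le> n\<close> h(1)] by metis+
  moreover have "tdeg (u + u' + k') = D"
    using R k'(2) by blast
  ultimately have "tdeg u' = 0" and min_h: "Min (tdeg ` Poly_Mapping.keys h) = 2"
    using deg_u by (simp_all add: tdeg_add)
  then have "shifted_coeff_sum R u (initial_form h) \<noteq> 0"
    using h(2) by (simp add: tdeg_eq_0_iff)
  moreover have "\<exists>m\<in>R. Poly_Mapping.keys u \<subseteq> Poly_Mapping.keys m"
    using k(2) keys_subset_keys_add[of u k] by blast
  ultimately show thesis
    by (intro that[OF h(1) _ deg_u min_h])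
qed

lemma quadratic_double_in_others:
  assumes mg: "min_gen_numerical a n" and "n > 1" and qd: "quadratic TYPE('k::field) a n"
    and i: "2 \<le> i" "i \<le> n"
  shows "2 * a i \<in> sg_gen a ({1..n} - {i})"
proof -
  obtain G :: "((nat \<Rightarrow>\<^sub>0 nat) \<Rightarrow>\<^sub>0 'k) set"
    where G2: "\<forall>g\<in>G. homogeneous 2 g" and G: "ideal_gen n G = I_H_star TYPE('k) a n"
    using qd unfolding quadratic_def by blast
  have i1: "i \<in> {1..n}" and one: "1 \<in> {1..n}"
    using i by auto
  define p where "p = Poly_Mapping.single i (a 1)"
  have "Poly_Mapping.single p (1::'k) \<in> initial_form ` (I_H a n - {0})"
    unfolding p_def
    by (rule single_in_initial_forms[where q = "Poly_Mapping.single 1 (a i)"])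
      (use i1 one min_gen_numerical_less[OF mg, of 1 i] i in \<open>auto simp: weight_single tdeg_single\<close>)
  then have "Poly_Mapping.single p (1::'k) \<in> ideal_gen n G"
    unfolding G I_H_star_def by (rule generator_in_ideal_gen)
  moreover have "\<forall>m\<in>{p}. tdeg m = a 1" "shifted_coeff_sum {p} 0 (Poly_Mapping.single p (1::'k)) \<noteq> 0"
    by (simp_all add: p_def tdeg_single shifted_coeff_sum_single)
  moreover have "1 \<le> n"
    using i by simp
  ultimately obtain u and h :: "(nat \<Rightarrow>\<^sub>0 nat) \<Rightarrow>\<^sub>0 'k"
    where h: "h \<in> I_H a n" "shifted_coeff_sum {p} u (initial_form h) \<noteq> 0"
      and "Min (tdeg ` Poly_Mapping.keys h) = 2"
    using I_H_star_generator_shift[OF mg _ G2 G] by blast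
  then obtain k where k: "k \<in> Poly_Mapping.keys (initial_form h)" "u + k = p"
    using shifted_coeff_sum_nonzero_imp_key by blast
  have "k = Poly_Mapping.single i (Poly_Mapping.lookup k i)"
    using add_eq_single_imp_single k(2) unfolding p_def .
  moreover have "tdeg k = 2"
    using keys_initial_form[OF k(1)] \<open>Min (tdeg ` Poly_Mapping.keys h) = 2\<close> by simp
  ultimately have "Poly_Mapping.single i 2 \<in> Poly_Mapping.keys h"
    using keys_initial_form[OF k(1)] by (metis tdeg_single)
  then show ?thesis
    using I_H_pure_power_key[OF mg h(1) i1] by blast
qed

section \<open>Least multiples of \<open>a\<^sub>1\<close> in \<open>\<langle>a\<^sub>2, \<dots>, a\<^sub>n\<rangle>\<close>\<close>

lemma sg_gen_multiple:
  assumes "finite J" "j \<in> J"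
  shows "c * a j \<in> sg_gen a J"
proof -
  have "(\<Sum>i\<in>J. (if i = j then c else 0) * a i) = (\<Sum>i\<in>J. if i = j then c * a i else 0)"
    by (rule sum.cong) auto
  also have "\<dots> = c * a j"
    using assms by simp
  finally show ?thesis
    unfolding sg_gen_def by (intro CollectI exI[of _ "\<lambda>i. if i = j then c else 0"]) simp
qed

definition tail_monomials :: "(nat \<Rightarrow> nat) \<Rightarrow> nat \<Rightarrow> nat \<Rightarrow> (nat \<Rightarrow>\<^sub>0 nat) set" where
  "tail_monomials a n w = {m. Poly_Mapping.keys m \<subseteq> {2..n} \<and> weight a n m = w}"

lemma tail_monomials_nonempty:
  assumes "w \<in> sg_gen a {2..n}"
  shows "tail_monomials a n w \<noteq> {}"
proof -
  obtain c where c: "w = (\<Sum>j\<in>{2..n}. c j * a j)"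
    using assms unfolding sg_gen_def by blast
  define m where "m = (\<Sum>j\<in>{2..n}. Poly_Mapping.single j (c j))"
  have lm: "Poly_Mapping.lookup m j = (if j \<in> {2..n} then c j else 0)" for j
    unfolding m_def by (simp add: lookup_sum lookup_single when_def sum.delta)
  have keys_m: "Poly_Mapping.keys m \<subseteq> {2..n}"
    by (auto simp: in_keys_iff lm split: if_splits)
  moreover have "weight a n m = w"
    unfolding weight_tail[OF keys_m] c by (intro sum.cong) (simp_all add: lm mult.commute)
  ultimately show ?thesis
    unfolding tail_monomials_def by blast
qed

lemma tdeg_less_of_tail_monomials:
  assumes mg: "min_gen_numerical a n" and "1 \<le> c" and m: "m \<in> tail_monomials a n (c * a 1)"
  shows "tdeg m < c"
proof -
  have keys: "Poly_Mapping.keys m \<subseteq> {2..n}" and w: "weight a n m = c * a 1"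
    using m unfolding tail_monomials_def by auto
  have "(a 1 + 1) * tdeg m = (\<Sum>j\<in>{2..n}. (a 1 + 1) * Poly_Mapping.lookup m j)"
    using tdeg_superset[OF _ keys] by (simp add: sum_distrib_left)
  also have "\<dots> \<le> (\<Sum>j\<in>{2..n}. a j * Poly_Mapping.lookup m j)"
    using min_gen_numerical_less[OF mg, of 1] by (intro sum_mono mult_right_mono) (auto simp: Suc_le_eq)
  also have "\<dots> = c * a 1"
    using weight_tail[OF keys] w by simp
  also have "\<dots> < (a 1 + 1) * c"
    using \<open>1 \<le> c\<close> by simp
  finally show ?thesis
    by (rule mult_left_less_imp_less) simp
qed

lemma tail_monomials_tdeg_2_dvd:
  assumes "b \<in> tail_monomials a n (c * a 1)" "tdeg b = 2"
  shows "\<exists>k l. 2 \<le> k \<and> k \<le> n \<and> 2 \<le> l \<and> l \<le> n \<and> a 1 dvd (a k + a l)"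
proof -
  obtain k l where b: "b = Poly_Mapping.single k 1 + Poly_Mapping.single l 1"
    using assms(2) by (rule tdeg_eq_2)
  then have "k \<in> Poly_Mapping.keys b" "l \<in> Poly_Mapping.keys b"
    by (simp_all add: in_keys_iff lookup_add lookup_single)
  then have "k \<in> {2..n}" "l \<in> {2..n}"
    using assms(1) unfolding tail_monomials_def by auto
  moreover from this have "a k + a l = c * a 1"
    using assms(1) b unfolding tail_monomials_def by (simp add: weight_add weight_single)
  ultimately show ?thesis
    by (metis atLeastAtMost_iff dvd_triv_right)
qed

text \<open>If \<open>x\<^sub>1\<close> occurred in \<open>v\<close>, removing the \<open>x\<^sub>1\<close>-part would leave a smaller such multiple
  \<open>c - v\<^sub>1\<close>.\<close>
lemma tail_monomials_of_least_multiple: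
  assumes mg: "min_gen_numerical a n"
    and least: "\<forall>c'. 1 \<le> c' \<and> c' * a 1 \<in> sg_gen a {2..n} \<longrightarrow> c \<le> c'"
    and v: "Poly_Mapping.keys v \<subseteq> {1..n}" "weight a n v = c * a 1"
    and j: "j \<in> {2..n}" "Poly_Mapping.lookup v j \<noteq> 0"
  shows "v \<in> tail_monomials a n (c * a 1)"
proof -
  have tail: "{1..n} - {1} = {2..n}" by auto
  have "Poly_Mapping.lookup v 1 = 0"
  proof (rule ccontr)
    assume "Poly_Mapping.lookup v 1 \<noteq> 0"
    define T where "T = (\<Sum>j\<in>{2..n}. a j * Poly_Mapping.lookup v j)"
    have eq: "c * a 1 = a 1 * Poly_Mapping.lookup v 1 + T"
      using weight_split[of 1 n a v] v j tail unfolding T_def by auto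
    have "0 < a j * Poly_Mapping.lookup v j"
      using j min_gen_numerical_pos[OF mg, of j] by auto
    also have "\<dots> \<le> T"
      unfolding T_def by (rule member_le_sum) (use j in auto)
    finally have "a 1 * Poly_Mapping.lookup v 1 < a 1 * c"
      using eq by (simp add: mult.commute)
    then have less: "Poly_Mapping.lookup v 1 < c" by simp
    have "(c - Poly_Mapping.lookup v 1) * a 1 = T"
      using eq by (metis add_diff_cancel_left' diff_mult_distrib mult.commute)
    moreover have "T \<in> sg_gen a {2..n}"
      unfolding sg_gen_def T_def by (intro CollectI exI[of _ "Poly_Mapping.lookup v"]) (simp add: mult.commute)
    ultimately have "c \<le> c - Poly_Mapping.lookup v 1"
      using least less by simp
    with less \<open>Poly_Mapping.lookup v 1 \<noteq> 0\<close> show False by simp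
  qed
  then have "Poly_Mapping.keys v \<subseteq> {2..n}"
    using v(1) tail by (auto simp: in_keys_iff)
  with v(2) show ?thesis
    unfolding tail_monomials_def by blast
qed

lemma I_H_weight_coeff_sum_eq_0:
  assumes "h \<in> I_H a n"
  shows "(\<Sum>x\<in>Poly_Mapping.keys h. if weight a n x + v = w then Poly_Mapping.lookup h x else 0) = 0"
proof (cases "v \<le> w")
  case True
  then have "(\<Sum>x\<in>Poly_Mapping.keys h. if weight a n x + v = w then Poly_Mapping.lookup h x else 0)
      = Poly_Mapping.lookup (sg_map a n h) (w - v)"
    by (auto simp: lookup_sg_map sum.inter_filter intro!: sum.cong)
  also have "\<dots> = 0"
    using assms by (simp add: I_H_def)
  finally show ?thesis .
qed (auto intro: sum.neutral)

text \<open>By minimality of \<open>c\<close> and maximality of \<open>B\<close>, the terms of \<open>x\<^sup>u f\<^sup>*\<close> that are counted are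
  exactly the terms of \<open>x\<^sup>u f\<close> of weight \<open>c a\<^sub>1\<close>, and these cancel since \<open>f \<in> I\<^sub>H\<close>.\<close>
lemma shifted_coeff_sum_initial_form_eq_0:
  fixes h :: "(nat \<Rightarrow>\<^sub>0 nat) \<Rightarrow>\<^sub>0 'k::field"
  assumes mg: "min_gen_numerical a n"
    and least: "\<forall>c'. 1 \<le> c' \<and> c' * a 1 \<in> sg_gen a {2..n} \<longrightarrow> c \<le> c'"
    and max: "\<forall>m\<in>tail_monomials a n (c * a 1). tdeg m \<le> B"
    and h: "h \<in> I_H a n"
    and u: "Poly_Mapping.keys u \<subseteq> {2..n}" "u \<noteq> 0" "tdeg u + Min (tdeg ` Poly_Mapping.keys h) = B"
  shows "shifted_coeff_sum (tail_monomials a n (c * a 1) \<inter> {m. tdeg m = B}) u (initial_form h) = 0"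
proof -
  let ?R = "tail_monomials a n (c * a 1) \<inter> {m. tdeg m = B}"
  let ?d = "Min (tdeg ` Poly_Mapping.keys h)"
  have key_iff: "u + x \<in> ?R \<and> tdeg x = ?d \<longleftrightarrow> weight a n x + weight a n u = c * a 1"
    if x: "x \<in> Poly_Mapping.keys h" for x
  proof
    assume "u + x \<in> ?R \<and> tdeg x = ?d"
    then show "weight a n x + weight a n u = c * a 1"
      by (simp add: tail_monomials_def weight_add add.commute)
  next
    assume w: "weight a n x + weight a n u = c * a 1"
    obtain j where j: "j \<in> Poly_Mapping.keys u"
      using u(2) by (metis ex_in_conv keys_eq_empty)
    have "u + x \<in> tail_monomials a n (c * a 1)"
    proof (rule tail_monomials_of_least_multiple[OF mg least])
      have "{2..n} \<subseteq> {1..n}" by auto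
      then show "Poly_Mapping.keys (u + x) \<subseteq> {1..n}"
        using keys_add[of u x] u(1) I_H_keys_subset[OF h x] by blast
      show "weight a n (u + x) = c * a 1"
        using w by (simp add: weight_add add.commute)
      show "j \<in> {2..n}"
        using j u(1) by blast
      show "Poly_Mapping.lookup (u + x) j \<noteq> 0"
        using j by (simp add: lookup_add in_keys_iff)
    qed
    moreover have "?d \<le> tdeg x"
      using x by simp
    ultimately show "u + x \<in> ?R \<and> tdeg x = ?d"
      using max u(3) by (force simp: tdeg_add)
  qed
  have "shifted_coeff_sum ?R u (initial_form h)
      = (\<Sum>x\<in>Poly_Mapping.keys h. if u + x \<in> ?R then Poly_Mapping.lookup (initial_form h) x else 0)"
    by (rule shifted_coeff_sum_superset) (auto dest: keys_initial_form)
  also have "\<dots> = (\<Sum>x\<in>Poly_Mapping.keys h.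
      if weight a n x + weight a n u = c * a 1 then Poly_Mapping.lookup h x else 0)"
  proof (rule sum.cong)
    fix x assume x: "x \<in> Poly_Mapping.keys h"
    then have "(if u + x \<in> ?R then Poly_Mapping.lookup (initial_form h) x else 0)
        = (if u + x \<in> ?R \<and> tdeg x = ?d then Poly_Mapping.lookup h x else 0)"
      by (simp add: lookup_initial_form)
    also have "\<dots> = (if weight a n x + weight a n u = c * a 1 then Poly_Mapping.lookup h x else 0)"
      by (simp only: key_iff[OF x])
    finally show "(if u + x \<in> ?R then Poly_Mapping.lookup (initial_form h) x else 0) = \<dots>" .
  qed simp
  also have "\<dots> = 0"
    using h by (rule I_H_weight_coeff_sum_eq_0)
  finally show ?thesis .
qed

lemma least_multiple_max_tail_monomial:
  assumes mg: "min_gen_numerical a n" and "n > 1"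
  obtains c b where "\<forall>c'. 1 \<le> c' \<and> c' * a 1 \<in> sg_gen a {2..n} \<longrightarrow> c \<le> c'"
    "b \<in> tail_monomials a n (c * a 1)" "\<forall>m\<in>tail_monomials a n (c * a 1). tdeg m \<le> tdeg b"
    "tdeg b < c"
proof -
  define c where "c = (LEAST c. 1 \<le> c \<and> c * a 1 \<in> sg_gen a {2..n})"
  have "1 \<le> a 2 \<and> a 2 * a 1 \<in> sg_gen a {2..n}"
    using min_gen_numerical_pos[OF mg, of 2] sg_gen_multiple[of "{2..n}" 2 "a 1" a] \<open>n > 1\<close>
    by (simp add: mult.commute Suc_le_eq)
  then have c: "1 \<le> c" "c * a 1 \<in> sg_gen a {2..n}"
    unfolding c_def by (metis (mono_tags, lifting) LeastI)+
  have least: "\<forall>c'. 1 \<le> c' \<and> c' * a 1 \<in> sg_gen a {2..n} \<longrightarrow> c \<le> c'"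
    unfolding c_def by (intro allI impI) (rule Least_le)
  define M where "M = tail_monomials a n (c * a 1)"
  have less: "\<forall>m\<in>M. tdeg m < c"
    using tdeg_less_of_tail_monomials[OF mg c(1)] unfolding M_def by blast
  then have "tdeg ` M \<subseteq> {..<c}" by auto
  then have fin: "finite (tdeg ` M)"
    by (rule finite_subset) simp
  have "M \<noteq> {}"
    using tail_monomials_nonempty[OF c(2)] unfolding M_def .
  then have "Max (tdeg ` M) \<in> tdeg ` M"
    using fin by (intro Max_in) auto
  then obtain b where b: "b \<in> M" "tdeg b = Max (tdeg ` M)"
    by (metis imageE)
  have "\<forall>m\<in>M. tdeg m \<le> tdeg b"
    unfolding b(2) using fin by simp
  with that least b(1) less show thesis
    unfolding M_def by blast
qed

lemma quadratic_exists_dvd_sum: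
  assumes mg: "min_gen_numerical a n" and "n > 1" and qd: "quadratic TYPE('k::field) a n"
  shows "\<exists>k l. 2 \<le> k \<and> k \<le> n \<and> 2 \<le> l \<and> l \<le> n \<and> a 1 dvd (a k + a l)"
proof (rule ccontr)
  assume no_dvd: "\<not> ?thesis"
  obtain G :: "((nat \<Rightarrow>\<^sub>0 nat) \<Rightarrow>\<^sub>0 'k) set"
    where G2: "\<forall>g\<in>G. homogeneous 2 g" and G: "ideal_gen n G = I_H_star TYPE('k) a n"
    using qd unfolding quadratic_def by blast
  obtain c b where least: "\<forall>c'. 1 \<le> c' \<and> c' * a 1 \<in> sg_gen a {2..n} \<longrightarrow> c \<le> c'"
    and b: "b \<in> tail_monomials a n (c * a 1)" "tdeg b < c"
    and max: "\<forall>m\<in>tail_monomials a n (c * a 1). tdeg m \<le> tdeg b"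
    using least_multiple_max_tail_monomial[OF mg \<open>n > 1\<close>] by metis
  define R where "R = tail_monomials a n (c * a 1) \<inter> {m. tdeg m = tdeg b}"
  have "Poly_Mapping.single b (1::'k) \<in> initial_form ` (I_H a n - {0})"
    by (rule single_in_initial_forms[where q = "Poly_Mapping.single 1 c"])
      (use b \<open>n > 1\<close> in \<open>auto simp: tail_monomials_def weight_single tdeg_single mult.commute\<close>)
  then have b_ideal: "Poly_Mapping.single b (1::'k) \<in> ideal_gen n G"
    unfolding G I_H_star_def by (rule generator_in_ideal_gen)
  have b_nz: "shifted_coeff_sum R 0 (Poly_Mapping.single b (1::'k)) \<noteq> 0"
    using b(1) by (simp add: R_def shifted_coeff_sum_single)
  have R_deg: "\<forall>m\<in>R. tdeg m = tdeg b"
    by (simp add: R_def)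
  have "1 \<le> n"
    using \<open>n > 1\<close> by simp
  obtain u and h :: "(nat \<Rightarrow>\<^sub>0 nat) \<Rightarrow>\<^sub>0 'k"
    where h: "h \<in> I_H a n" "shifted_coeff_sum R u (initial_form h) \<noteq> 0"
      and u: "tdeg u + 2 = tdeg b" "Min (tdeg ` Poly_Mapping.keys h) = 2"
      "\<exists>m\<in>R. Poly_Mapping.keys u \<subseteq> Poly_Mapping.keys m"
    by (rule I_H_star_generator_shift[OF mg \<open>1 \<le> n\<close> G2 G R_deg b_ideal b_nz])
  have "Poly_Mapping.keys u \<subseteq> {2..n}"
    using u(3) unfolding R_def tail_monomials_def by blast
  moreover have "u \<noteq> 0"
    using u(1) tail_monomials_tdeg_2_dvd[OF b(1)] no_dvd by (auto simp: tdeg_def)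
  ultimately have "shifted_coeff_sum R u (initial_form h) = 0"
    unfolding R_def using u(1,2)
    by (intro shifted_coeff_sum_initial_form_eq_0[OF mg least max h(1)]) simp_all
  with h(2) show False ..
qed

theorem lemma1p6:
  fixes a :: "nat \<Rightarrow> nat" and n :: nat
  assumes "min_gen_numerical a n" and "n > 1"
    and "quadratic TYPE('k::field) a n"
  shows "(\<exists>k l. 2 \<le> k \<and> k \<le> n \<and> 2 \<le> l \<and> l \<le> n \<and> a 1 dvd (a k + a l))
       \<and> (\<forall>i. 2 \<le> i \<and> i \<le> n \<longrightarrow> 2 * a i \<in> sg_gen a ({1..n} - {i}))"
  using quadratic_exists_dvd_sum[OF assms] quadratic_double_in_others[OF assms] by blast

end
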